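(* Let $n\ge2$, $1\le k\le n-1$. Let $Y$ have a continuous distribution function $G$ on $[l_G,r_G]$, and let $g$ be continuous and strictly increasing on $(l_G,r_G)$ with $g(l_G^+):=\lim_{y\to l_G^+}g(y)>-\infty$ and $\lim_{y\to r_G^-}g(y)=\infty$. Then \[ E[g(Y(n))\mid Y(n-k)=s,\ Y(n+1)=t]=\frac{k\,g(t)+g(s)}{k+1}\qquad (l_G<s<t<r_G) \] holds if and only if $G(y)=1-e^{-c[g(y)-g(l_G^+)]}$ for $l_G<y<r_G$, for some constant $c>0$.
   Context: $Y_1,Y_2,\dots$ are i.i.d. copies of $Y$ with distribution function $G$; $l_G=\inf\{y:G(y)>0\}$, $r_G=\sup\{y:G(y)<1\}$. Upper record times $L(1)=1$, $L(m)=\min\{j>L(m-1):Y_j>Y_{L(m-1)}\}$, record values $Y(m)=Y_{L(m)}$. With $R(y)=-\ln(1-G(y))$, conditional expectations given $Y(n-k)=s$, $Y(n+1)=t$ use the conditional density of $Y(n)$: $k[\frac{R(x)-R(s)}{R(t)-R(s)}]^{k-1}\frac{R'(x)}{R(t)-R(s)}$, $s<x<t$. *)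

theory Defs
  imports "HOL-Analysis.Analysis"
begin

definition cont_dist_fun :: "(real \<Rightarrow> real) \<Rightarrow> bool" where
  "cont_dist_fun G \<longleftrightarrow> mono G \<and> continuous_on UNIV G \<and>
     (G \<longlongrightarrow> 0) at_bot \<and> (G \<longlongrightarrow> 1) at_top"

definition lG :: "(real \<Rightarrow> real) \<Rightarrow> ereal" where
  "lG G = Inf {ereal y | y. G y > 0}"

definition rG :: "(real \<Rightarrow> real) \<Rightarrow> ereal" where
  "rG G = Sup {ereal y | y. G y < 1}"

definition at_right_e :: "ereal \<Rightarrow> real filter" where
  "at_right_e l = (if l = -\<infinity> then at_bot else at_right (real_of_ereal l))"

definition at_left_e :: "ereal \<Rightarrow> real filter" where
  "at_left_e r = (if r = \<infinity> then at_top else at_left (real_of_ereal r))"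

definition hazR :: "(real \<Rightarrow> real) \<Rightarrow> real \<Rightarrow> real" where
  "hazR G y = - ln (1 - G y)"

text \<open>Conditional distribution function of Y(n) given Y(n-k)=s, Y(n+1)=t:
  on (s,t) it is ((R x - R s)/(R t - R s))^k (whose derivative is the
  conditional density k[(R x-R s)/(R t-R s)]^(k-1) R'(x)/(R t-R s)).\<close>
definition cond_cdf :: "(real \<Rightarrow> real) \<Rightarrow> nat \<Rightarrow> real \<Rightarrow> real \<Rightarrow> real \<Rightarrow> real" where
  "cond_cdf G k s t x =
     (if x \<le> s then 0 else if t \<le> x then 1
      else ((hazR G x - hazR G s) / (hazR G t - hazR G s)) ^ k)"

text \<open>E[g(Y(n)) | Y(n-k)=s, Y(n+1)=t], as Lebesgue--Stieltjes integral
  against the conditional distribution.\<close>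
definition cond_exp_rec ::
  "(real \<Rightarrow> real) \<Rightarrow> nat \<Rightarrow> (real \<Rightarrow> real) \<Rightarrow> real \<Rightarrow> real \<Rightarrow> real" where
  "cond_exp_rec G k g s t =
     (LINT x:{s<..<t}|interval_measure (cond_cdf G k s t). g x)"

end

theory Submission
  imports Defs
begin

text \<open>
  Write S = (l_G, r_G), R = -ln(1 - G) for the cumulative hazard, P_s(x) = (R x - R s)^k and
  J_s(x) = P_s(x) E[g(Y(n)) | s, x].  Given Y(n-k) = s and Y(n+1) = x, the law of Y(n) on (s,x)
  has distribution function (R - R s)^k / P_s(x), so J_s(x) is the Stieltjes integral of g over
  (s,x) against d(R - R s)^k.  The one fact about conditional expectations that is used is the
  resulting increment bound: for s <= x < y,
     g x (P_s y - P_s x) <= J_s y - J_s x <= g y (P_s y - P_s x).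

  Sufficiency: if G = 1 - exp(-c (g - g(l_G+))), then R is affine in g, and the explicit function
  K(x) = P_s(x) (k g x + g s)/(k+1) satisfies the same increment bound (a weighted AM-GM
  inequality).  Hence J_s - K has increments dominated by |g y - g x| (P_s y - P_s x); by uniform
  continuity of g it is constant, and it vanishes at s.  Dividing J_s(t) = K(t) by P_s(t) > 0
  gives the identity.

  Necessity: inserting the identity into the increment bound for t < t' and letting t' -> t+
  shows that the right derivative of g with respect to R at t equals the chord slope
  (g t - g s)/(R t - R s) for every s < t.  So all chords of the curve (R, g) have one slope
  beta > 0, g = g(l_G+) + beta R on S because R -> 0 at l_G, and G = 1 - exp(-(g - g(l_G+))/beta).
\<close>

section \<open>Lebesgue--Stieltjes measures of continuous nondecreasing functions\<close>

lemma interval_measure_Ioc_cont: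
  assumes "mono F" "continuous_on UNIV F" "a \<le> b"
  shows "emeasure (interval_measure F) {a<..b} = ennreal (F b - F a)"
  using assms by (intro emeasure_interval_measure_Ioc)
    (auto simp: monoD continuous_on_eq_continuous_within continuous_at_imp_continuous_at_within)

lemma interval_measure_singleton_null:
  assumes "mono F" "continuous_on UNIV F"
  shows "{a} \<in> null_sets (interval_measure F)"
  using emeasure_interval_measure_Icc[of a a F] assms by (auto simp: null_sets_def monoD)

lemma interval_measure_Ioo:
  assumes F: "mono F" "continuous_on UNIV F" and "a \<le> b"
  shows "emeasure (interval_measure F) {a<..<b} = ennreal (F b - F a)"
proof -
  have "{a<..<b} = {a<..b} - {b}" by auto
  then show ?thesis
    using emeasure_Diff_null_set[OF interval_measure_singleton_null[OF F], of "{a<..b}"]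
      interval_measure_Ioc_cont[OF F \<open>a \<le> b\<close>] by simp
qed

lemma measure_interval_measure_Ioo:
  assumes "mono F" "continuous_on UNIV F" "a \<le> b"
  shows "measure (interval_measure F) {a<..<b} = F b - F a"
  using interval_measure_Ioo[OF assms] assms by (simp add: measure_def monoD)

lemma set_integrable_interval_measure:
  fixes f :: "real \<Rightarrow> real"
  assumes F: "mono F" "continuous_on UNIV F"
    and A: "A \<in> sets borel" "A \<subseteq> {u..w}" and f: "continuous_on {u..w} f"
  shows "set_integrable (interval_measure F) A f"
proof -
  obtain B where B: "\<And>x. x \<in> {u..w} \<Longrightarrow> norm (f x) \<le> B"
    using compact_imp_bounded[OF compact_continuous_image[OF f compact_Icc]]
    unfolding bounded_iff by blast
  have "emeasure (interval_measure F) A \<le> emeasure (interval_measure F) {u - 1<..max u w}"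
    using A by (intro emeasure_mono) auto
  also have "\<dots> < \<infinity>"
    using interval_measure_Ioc_cont[OF F, of "u - 1" "max u w"] by simp
  finally have fin: "emeasure (interval_measure F) A < \<infinity>" .
  have "set_borel_measurable borel A f"
    unfolding set_borel_measurable_def
    by (rule borel_measurable_continuous_on_indicator[OF A(1) continuous_on_subset[OF f A(2)]])
  then have meas: "set_borel_measurable (interval_measure F) A f"
    unfolding set_borel_measurable_def by (simp only: measurable_cong_sets[OF sets_interval_measure refl])
  have const: "set_integrable (interval_measure F) A (\<lambda>_. B)"
    unfolding set_integrable_def
    using A(1) fin by (intro integrable_scaleR_left integrable_real_indicator) auto
  show ?thesis
  proof (rule set_integrable_bound[OF const meas], rule AE_I2, intro impI)
    fix x assume "x \<in> A"
    then show "norm (f x) \<le> norm B" using A(2) B[of x] by auto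
  qed
qed

lemma set_integral_interval_measure_bounds:
  fixes f :: "real \<Rightarrow> real"
  assumes F: "mono F" "continuous_on UNIV F" and "u \<le> w" and f: "continuous_on {u..w} f"
    and bnd: "\<And>x. x \<in> {u<..<w} \<Longrightarrow> m \<le> f x \<and> f x \<le> M"
  shows "m * (F w - F u) \<le> (LINT x:{u<..<w}|interval_measure F. f x)"
    and "(LINT x:{u<..<w}|interval_measure F. f x) \<le> M * (F w - F u)"
proof -
  let ?\<mu> = "interval_measure F"
  have fin: "emeasure ?\<mu> {u<..<w} \<noteq> \<infinity>" using interval_measure_Ioo[OF F \<open>u \<le> w\<close>] by simp
  have const: "(LINT x:{u<..<w}|?\<mu>. a) = a * (F w - F u)" for a :: real
    using set_integral_const[OF _ fin, of a] measure_interval_measure_Ioo[OF F \<open>u \<le> w\<close>]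
    by (simp add: mult.commute)
  have int: "set_integrable ?\<mu> {u<..<w} h" if "continuous_on {u..w} h" for h :: "real \<Rightarrow> real"
    by (rule set_integrable_interval_measure[OF F _ _ that]) auto
  show "m * (F w - F u) \<le> (LINT x:{u<..<w}|?\<mu>. f x)"
    unfolding const[symmetric] using bnd f by (intro set_integral_mono int) auto
  show "(LINT x:{u<..<w}|?\<mu>. f x) \<le> M * (F w - F u)"
    unfolding const[symmetric] using bnd f by (intro set_integral_mono int) auto
qed

lemma set_integral_interval_measure_Ioc_Ioo:
  fixes f :: "real \<Rightarrow> real"
  assumes F: "mono F" "continuous_on UNIV F" and "u \<le> w" and f: "continuous_on {u..w} f"
  shows "(LINT x:{u<..w}|interval_measure F. f x) = (LINT x:{u<..<w}|interval_measure F. f x)"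
proof -
  have meas: "set_borel_measurable (interval_measure F) A f" if "A \<in> sets borel" "A \<subseteq> {u..w}" for A
    using set_integrable_interval_measure[OF F that f]
    unfolding set_integrable_def set_borel_measurable_def by (rule borel_measurable_integrable)
  show ?thesis
  proof (rule set_integral_cong_set[OF meas meas])
    show "AE x in interval_measure F. (x \<in> {u<..<w}) = (x \<in> {u<..w})"
      by (rule AE_I'[OF interval_measure_singleton_null[OF F, of w]]) auto
  qed auto
qed

lemma borel_measure_eqI_Ioc:
  fixes M N :: "real measure"
  assumes "sets M = sets borel" "sets N = sets borel"
    and eq: "\<And>a b. a \<le> b \<Longrightarrow> emeasure M {a<..b} = emeasure N {a<..b}"
    and fin: "\<And>a b. a \<le> b \<Longrightarrow> emeasure M {a<..b} \<noteq> \<infinity>"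
  shows "M = N"
proof (rule measure_eqI_generator_eq[where \<Omega>=UNIV and E="range (\<lambda>(a, b). {a<..b::real})"
      and A="\<lambda>i. {- real i<..real i}"])
  fix X assume "X \<in> range (\<lambda>(a, b). {a<..b::real})"
  then obtain a b where "X = {a<..b}" by auto
  then show "emeasure M X = emeasure N X" by (cases "a \<le> b") (simp_all add: eq)
next
  show "(\<Union>i. {- real (i::nat)<..real i}) = UNIV"
  proof (intro set_eqI iffI)
    fix x :: real
    obtain n :: nat where "\<bar>x\<bar> < real n" using reals_Archimedean2 by blast
    then show "x \<in> (\<Union>i. {- real (i::nat)<..real i})" by (intro UN_I[of n]) auto
  qed auto
next
  fix i :: nat show "emeasure M {- real i<..real i} \<noteq> \<infinity>" by (rule fin) simp
qed (auto simp: assms(1,2) borel_sigma_sets_Ioc Int_stable_def)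

lemma interval_measure_restricted_scaled:
  fixes F1 F2 :: "real \<Rightarrow> real"
  assumes F1: "mono F1" "continuous_on UNIV F1" and F2: "mono F2" "continuous_on UNIV F2"
    and "c \<ge> 0"
    and incr: "\<And>x y. u \<le> x \<Longrightarrow> x \<le> y \<Longrightarrow> y \<le> w \<Longrightarrow> F1 y - F1 x = c * (F2 y - F2 x)"
  shows "density (interval_measure F1) (indicator {u<..w}) =
         density (density (interval_measure F2) (indicator {u<..w})) (\<lambda>_. ennreal c)"
    (is "?N1 = ?N2")
proof (rule borel_measure_eqI_Ioc)
  fix a b :: real assume "a \<le> b"
  have cut: "{u<..w} \<inter> {a<..b} = {max u a<..min w b}" by auto
  show "emeasure ?N1 {a<..b} = emeasure ?N2 {a<..b}"
  proof (cases "max u a \<le> min w b")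
    case True
    have "F2 (max u a) \<le> F2 (min w b)" using True by (rule monoD[OF F2(1)])
    then show ?thesis
      using incr[of "max u a" "min w b"] True \<open>c \<ge> 0\<close>
      by (simp add: emeasure_density_const emeasure_restricted cut interval_measure_Ioc_cont[OF F1 True]
          interval_measure_Ioc_cont[OF F2 True] ennreal_mult[symmetric])
  next
    case False
    then have empty: "{u<..w} \<inter> {a<..b} = {}" by auto
    have "emeasure ?N1 {a<..b} = emeasure (interval_measure F1) ({u<..w} \<inter> {a<..b})"
      by (rule emeasure_restricted) auto
    moreover have "emeasure ?N2 {a<..b} = ennreal c * emeasure (interval_measure F2) ({u<..w} \<inter> {a<..b})"
      by (subst emeasure_density_const, simp, subst emeasure_restricted) auto
    ultimately show ?thesis unfolding empty by simp
  qed
  have "emeasure ?N1 {a<..b} \<le> emeasure (interval_measure F1) {a<..b}"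
    by (subst emeasure_restricted) (auto intro!: emeasure_mono)
  then show "emeasure ?N1 {a<..b} \<noteq> \<infinity>"
    using interval_measure_Ioc_cont[OF F1 \<open>a \<le> b\<close>] by (auto simp: top_unique)
qed simp_all

lemma set_integral_interval_measure_scaled:
  fixes F1 F2 f :: "real \<Rightarrow> real"
  assumes F1: "mono F1" "continuous_on UNIV F1" and F2: "mono F2" "continuous_on UNIV F2"
    and "c \<ge> 0"
    and incr: "\<And>x y. u \<le> x \<Longrightarrow> x \<le> y \<Longrightarrow> y \<le> w \<Longrightarrow> F1 y - F1 x = c * (F2 y - F2 x)"
    and f: "continuous_on {u..w} f"
  shows "(LINT x:{u<..w}|interval_measure F1. f x) = c * (LINT x:{u<..w}|interval_measure F2. f x)"
proof -
  let ?S = "{u<..w}" and ?f = "\<lambda>x. indicator {u<..w} x *\<^sub>R f x"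
  have "?f \<in> borel_measurable borel"
    by (rule borel_measurable_continuous_on_indicator) (auto intro: continuous_on_subset[OF f])
  then have meas: "?f \<in> borel_measurable (interval_measure F)" for F
    by (simp only: measurable_cong_sets[OF sets_interval_measure refl])
  have restrict: "integral\<^sup>L (density (interval_measure F) (indicator ?S)) ?f =
      (LINT x:?S|interval_measure F. f x)" for F
  proof -
    have "integral\<^sup>L (density (interval_measure F) (\<lambda>x. ennreal (indicator ?S x))) ?f =
        (LINT x:?S|interval_measure F. f x)"
      unfolding set_lebesgue_integral_def
      by (subst integral_density[OF meas]) (auto intro!: Bochner_Integration.integral_cong split: split_indicator)
    then show ?thesis by (simp add: ennreal_indicator)
  qed
  have "(LINT x:?S|interval_measure F1. f x) = integral\<^sup>L (density (interval_measure F1) (indicator ?S)) ?f"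
    by (rule restrict[symmetric])
  also have "\<dots> = integral\<^sup>L (density (density (interval_measure F2) (indicator ?S)) (\<lambda>_. ennreal c)) ?f"
    by (simp only: interval_measure_restricted_scaled[OF F1 F2 \<open>c \<ge> 0\<close> incr])
  also have "\<dots> = integral\<^sup>L (density (interval_measure F2) (indicator ?S)) (\<lambda>x. c *\<^sub>R ?f x)"
    using \<open>c \<ge> 0\<close> by (intro integral_density) (auto simp: meas[simplified] measurable_cong_sets[OF sets_density refl])
  also have "\<dots> = c * (LINT x:?S|interval_measure F2. f x)"
    unfolding restrict[symmetric] by simp
  finally show ?thesis .
qed

section \<open>The cumulative hazard and the conditional law of Y(n)\<close>

lemma hazR_mono:
  assumes "mono G" "G y < 1" "x \<le> y"
  shows "hazR G x \<le> hazR G y"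
  using assms monoD[OF assms(1) assms(3)] unfolding hazR_def by simp

lemma hazR_strict_mono:
  assumes "G y < 1" "G x < G y"
  shows "hazR G x < hazR G y"
  using assms unfolding hazR_def by simp

lemma hazR_less_iff:
  assumes "G x < 1" "G y < 1"
  shows "hazR G x < hazR G y \<longleftrightarrow> G x < G y"
  using assms unfolding hazR_def by simp

lemma continuous_on_hazR:
  assumes "mono G" "continuous_on UNIV G" "G t < 1"
  shows "continuous_on {..t} (hazR G)"
proof -
  have "1 - G x \<noteq> 0" if "x \<le> t" for x using monoD[OF assms(1) that] assms(3) by simp
  then show ?thesis unfolding hazR_def
    by (intro continuous_intros continuous_on_subset[OF assms(2)]) auto
qed

lemma isCont_hazR:
  assumes "continuous_on UNIV G" "G x < 1"
  shows "isCont (hazR G) x"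
  using assms unfolding hazR_def by (intro continuous_intros) (auto simp: continuous_on_eq_continuous_at)

text \<open>The normalising mass P_s(x) = (R x - R s)^k: the conditional law of Y(n) given
  Y(n-k) = s, Y(n+1) = x has distribution function (R - R s)^k / P_s(x) on (s,x).\<close>
definition hazard_mass :: "(real \<Rightarrow> real) \<Rightarrow> nat \<Rightarrow> real \<Rightarrow> real \<Rightarrow> real" where
  "hazard_mass G k s x = (hazR G x - hazR G s) ^ k"

text \<open>The partial moment J_s(x) = P_s(x) E[g(Y(n)) | s, x], i.e. the Stieltjes integral of g over (s,x)
  against the unnormalised measure d(R - R s)^k.  It is additive in x, which drives the whole proof.\<close>
definition partial_moment ::
  "(real \<Rightarrow> real) \<Rightarrow> nat \<Rightarrow> (real \<Rightarrow> real) \<Rightarrow> real \<Rightarrow> real \<Rightarrow> real" where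
  "partial_moment G k g s x = hazard_mass G k s x * cond_exp_rec G k g s x"

lemma cond_cdf_clamped:
  assumes "s < t" "k \<ge> 1" "hazR G s < hazR G t"
  shows "cond_cdf G k s t x = hazard_mass G k s (max s (min t x)) / hazard_mass G k s t"
  using assms by (auto simp: cond_cdf_def hazard_mass_def power_divide max_def min_def)

lemma cond_cdf_between:
  assumes "s < t" "k \<ge> 1" "hazR G s < hazR G t" "s \<le> x" "x \<le> t"
  shows "cond_cdf G k s t x = hazard_mass G k s x / hazard_mass G k s t"
  using cond_cdf_clamped[OF assms(1-3)] assms(4,5) by simp

lemma cond_cdf_mono_cont:
  assumes G: "mono G" "continuous_on UNIV G" "G t < 1" and "s < t" "k \<ge> 1" "G s < G t"
  shows "mono (cond_cdf G k s t)" "continuous_on UNIV (cond_cdf G k s t)"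
proof -
  let ?R = "hazR G" and ?c = "\<lambda>x. max s (min t x)"
  have Rst: "?R s < ?R t" by (rule hazR_strict_mono[of G t s, OF G(3) \<open>G s < G t\<close>])
  have c_in: "s \<le> ?c x" "?c x \<le> t" for x using \<open>s < t\<close> by auto
  have Gc: "G (?c x) < 1" for x using monoD[OF G(1) c_in(2)[of x]] G(3) by simp
  have eq: "cond_cdf G k s t = (\<lambda>x. ((?R (?c x) - ?R s) / (?R t - ?R s)) ^ k)"
    using cond_cdf_clamped[OF \<open>s < t\<close> \<open>k \<ge> 1\<close> Rst]
    by (auto simp: hazard_mass_def power_divide)
  show "mono (cond_cdf G k s t)"
    unfolding eq
  proof (rule monoI)
    fix x y :: real assume "x \<le> y"
    then have "?R (?c x) \<le> ?R (?c y)" by (intro hazR_mono[OF G(1) Gc]) auto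
    moreover have "?R s \<le> ?R (?c x)" by (intro hazR_mono[OF G(1) Gc] c_in)
    ultimately show "((?R (?c x) - ?R s) / (?R t - ?R s)) ^ k \<le> ((?R (?c y) - ?R s) / (?R t - ?R s)) ^ k"
      using Rst by (intro power_mono divide_right_mono) auto
  qed
  have "continuous_on UNIV (\<lambda>x. ?R (?c x))"
  proof (rule continuous_on_compose2[OF continuous_on_hazR[OF G]])
    show "continuous_on UNIV ?c" by (intro continuous_intros)
  qed (use c_in in auto)
  then show "continuous_on UNIV (cond_cdf G k s t)"
    unfolding eq using Rst by (intro continuous_intros) auto
qed

lemma cond_exp_rec_bounds:
  assumes G: "mono G" "continuous_on UNIV G" "G t < 1" and "s < t" "k \<ge> 1" "G s < G t"
    and g: "continuous_on {s..t} g" "mono_on {s..t} g"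
  shows "g s \<le> cond_exp_rec G k g s t" "cond_exp_rec G k g s t \<le> g t"
proof -
  have Rst: "hazR G s < hazR G t" by (rule hazR_strict_mono[of G t s, OF G(3) \<open>G s < G t\<close>])
  have "cond_cdf G k s t t - cond_cdf G k s t s = 1"
    using Rst \<open>s < t\<close> \<open>k \<ge> 1\<close> by (simp add: cond_cdf_between hazard_mass_def)
  moreover have "g s \<le> g x \<and> g x \<le> g t" if "x \<in> {s<..<t}" for x
    using that g(2) by (auto intro: mono_onD)
  ultimately show "g s \<le> cond_exp_rec G k g s t" "cond_exp_rec G k g s t \<le> g t"
    unfolding cond_exp_rec_def
    using set_integral_interval_measure_bounds[OF cond_cdf_mono_cont[OF assms(1-6)] _ g(1), of "g s" "g t"]
      \<open>s < t\<close> by auto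
qed

lemma hazard_mass_pos:
  assumes "G t < 1" "G s < G t"
  shows "0 < hazard_mass G k s t"
  using hazR_strict_mono[of G t s, OF assms] unfolding hazard_mass_def by simp

lemma cond_law_restriction:
  assumes G: "mono G" "continuous_on UNIV G" and "k \<ge> 1"
    and "s < t" "t < t'" "G s < G t" "G t < G t'" "G t' < 1"
    and g: "continuous_on {s..t} g"
  shows "(LINT x:{s<..t}|interval_measure (cond_cdf G k s t'). g x) =
    hazard_mass G k s t / hazard_mass G k s t' * cond_exp_rec G k g s t"
proof -
  let ?P = "hazard_mass G k s"
  have Gt: "G t < 1" using \<open>G t < G t'\<close> \<open>G t' < 1\<close> by simp
  have Gst': "G s < G t'" using \<open>G s < G t\<close> \<open>G t < G t'\<close> by simp
  note law = cond_cdf_mono_cont[OF G Gt \<open>s < t\<close> \<open>k \<ge> 1\<close> \<open>G s < G t\<close>]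
  have "s < t'" using \<open>s < t\<close> \<open>t < t'\<close> by simp
  note law' = cond_cdf_mono_cont[OF G \<open>G t' < 1\<close> this \<open>k \<ge> 1\<close> Gst']
  have pos: "0 < ?P t" "0 < ?P t'" using hazard_mass_pos Gt \<open>G t' < 1\<close> \<open>G s < G t\<close> Gst' by auto
  have "(LINT x:{s<..t}|interval_measure (cond_cdf G k s t'). g x) =
      ?P t / ?P t' * (LINT x:{s<..t}|interval_measure (cond_cdf G k s t). g x)"
  proof (rule set_integral_interval_measure_scaled[OF law' law])
    fix x y assume "s \<le> x" "x \<le> y" "y \<le> t"
    then show "cond_cdf G k s t' y - cond_cdf G k s t' x =
        ?P t / ?P t' * (cond_cdf G k s t y - cond_cdf G k s t x)"
      using \<open>s < t\<close> \<open>t < t'\<close> \<open>k \<ge> 1\<close> pos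
        hazR_strict_mono[of G t s, OF Gt \<open>G s < G t\<close>] hazR_strict_mono[of G t' s, OF \<open>G t' < 1\<close> Gst']
      by (simp add: cond_cdf_between field_simps)
  qed (use \<open>s < t\<close> \<open>t < t'\<close> pos g in auto)
  also have "(LINT x:{s<..t}|interval_measure (cond_cdf G k s t). g x) = cond_exp_rec G k g s t"
    unfolding cond_exp_rec_def using \<open>s < t\<close> by (intro set_integral_interval_measure_Ioc_Ioo law g) auto
  finally show ?thesis .
qed

text \<open>The increment J_s(t') - J_s(t) is the integral of g over (t,t') against the measure of
  mass P_s(t') - P_s(t); hence it lies between g t and g t' times that mass.\<close>
lemma cond_exp_rec_increment:
  assumes G: "mono G" "continuous_on UNIV G" and "k \<ge> 1"
    and "s < t" "t < t'" "G s < G t" "G t < G t'" "G t' < 1"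
    and g: "continuous_on {s..t'} g" "mono_on {s..t'} g"
  shows "g t * (hazard_mass G k s t' - hazard_mass G k s t) \<le>
      partial_moment G k g s t' - partial_moment G k g s t"
    and "partial_moment G k g s t' - partial_moment G k g s t \<le>
      g t' * (hazard_mass G k s t' - hazard_mass G k s t)"
proof -
  let ?P = "hazard_mass G k s" and ?\<mu> = "interval_measure (cond_cdf G k s t')"
  have "s < t'" "G s < G t'" using assms by auto
  note law = cond_cdf_mono_cont[OF G \<open>G t' < 1\<close> \<open>s < t'\<close> \<open>k \<ge> 1\<close> \<open>G s < G t'\<close>]
  have pos: "0 < ?P t" "0 < ?P t'" using hazard_mass_pos assms by auto
  have int: "set_integrable ?\<mu> A g" if "A \<in> sets borel" "A \<subseteq> {s..t'}" for A
    by (rule set_integrable_interval_measure[OF law that g(1)])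
  have "cond_exp_rec G k g s t' = (LINT x:{s<..t}|?\<mu>. g x) + (LINT x:{t<..<t'}|?\<mu>. g x)"
  proof -
    have "{s<..<t'} = {s<..t} \<union> {t<..<t'}" using assms by auto
    then show ?thesis unfolding cond_exp_rec_def using assms
      by (simp only:) (rule set_integral_Un[OF _ int int]; auto)
  qed
  moreover have "(LINT x:{s<..t}|?\<mu>. g x) = ?P t / ?P t' * cond_exp_rec G k g s t"
    using assms by (intro cond_law_restriction continuous_on_subset[OF g(1)]) auto
  ultimately have split:
    "partial_moment G k g s t' - partial_moment G k g s t = ?P t' * (LINT x:{t<..<t'}|?\<mu>. g x)"
    unfolding partial_moment_def using pos by (simp add: field_simps)
  have "cond_cdf G k s t' t = ?P t / ?P t'"
    using assms hazR_strict_mono[of G t' s, OF \<open>G t' < 1\<close> \<open>G s < G t'\<close>]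
    by (intro cond_cdf_between) auto
  moreover have "cond_cdf G k s t' t' = 1" using \<open>s < t'\<close> by (simp add: cond_cdf_def)
  ultimately have mass: "cond_cdf G k s t' t' - cond_cdf G k s t' t = 1 - ?P t / ?P t'" by simp
  have bnd: "g t \<le> g x \<and> g x \<le> g t'" if "x \<in> {t<..<t'}" for x
    using that g(2) \<open>s < t\<close> by (auto intro: mono_onD)
  have "continuous_on {t..t'} g" using \<open>s < t\<close> by (auto intro: continuous_on_subset[OF g(1)])
  note bounds = set_integral_interval_measure_bounds[OF law less_imp_le[OF \<open>t < t'\<close>] this bnd,
      unfolded mass]
  have "g t * (?P t' - ?P t) = ?P t' * (g t * (1 - ?P t / ?P t'))" using pos by (simp add: field_simps)
  also have "\<dots> \<le> ?P t' * (LINT x:{t<..<t'}|?\<mu>. g x)"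
    using bounds \<open>s < t\<close> \<open>t < t'\<close> pos by (intro mult_left_mono) auto
  finally show "g t * (?P t' - ?P t) \<le> partial_moment G k g s t' - partial_moment G k g s t"
    unfolding split .
  have "?P t' * (LINT x:{t<..<t'}|?\<mu>. g x) \<le> ?P t' * (g t' * (1 - ?P t / ?P t'))"
    using bounds \<open>s < t\<close> \<open>t < t'\<close> pos by (intro mult_left_mono) auto
  also have "\<dots> = g t' * (?P t' - ?P t)" using pos by (simp add: field_simps)
  finally show "partial_moment G k g s t' - partial_moment G k g s t \<le> g t' * (?P t' - ?P t)"
    unfolding split .
qed

lemma partial_moment_increment:
  assumes G: "mono G" "continuous_on UNIV G" "G y < 1" "strict_mono_on {s..y} G" and "k \<ge> 1"
    and g: "continuous_on {s..y} g" "mono_on {s..y} g" and "s \<le> x" "x < y"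
  shows "g x * (hazard_mass G k s y - hazard_mass G k s x) \<le>
      partial_moment G k g s y - partial_moment G k g s x \<and>
    partial_moment G k g s y - partial_moment G k g s x \<le>
      g y * (hazard_mass G k s y - hazard_mass G k s x)"
proof (cases "x = s")
  case True
  have "s < y" "G s < G y" using True \<open>x < y\<close> G(4) by (auto simp: strict_mono_on_def)
  have E: "g s \<le> cond_exp_rec G k g s y" "cond_exp_rec G k g s y \<le> g y"
    by (rule cond_exp_rec_bounds[OF G(1-3) \<open>s < y\<close> \<open>k \<ge> 1\<close> \<open>G s < G y\<close> g])+
  have P: "0 \<le> hazard_mass G k s y" using hazard_mass_pos[of G y s k, OF G(3) \<open>G s < G y\<close>] by simp
  have "hazard_mass G k s s = 0" using \<open>k \<ge> 1\<close> by (simp add: hazard_mass_def)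
  then show ?thesis
    using True mult_left_mono[OF E(1) P] mult_left_mono[OF E(2) P]
    by (simp add: partial_moment_def mult.commute)
next
  case False
  then have "s < x" "G s < G x" "G x < G y" using \<open>s \<le> x\<close> \<open>x < y\<close> G(4) by (auto simp: strict_mono_on_def)
  then show ?thesis
    using cond_exp_rec_increment[OF G(1,2) \<open>k \<ge> 1\<close> \<open>s < x\<close> \<open>x < y\<close> _ _ G(3) g] by simp
qed

section \<open>Elementary real analysis\<close>

text \<open>A function whose increments are dominated by |g y - g x| (P y - P x), with g continuous
  and P nondecreasing, is constant: sum the bound over a fine partition and use uniform
  continuity of g.\<close>
lemma dominated_increments_imp_constant:
  fixes D P g :: "real \<Rightarrow> real"
  assumes "a \<le> b" and g: "continuous_on {a..b} g" and P: "mono_on {a..b} P"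
    and dom: "\<And>x y. a \<le> x \<Longrightarrow> x < y \<Longrightarrow> y \<le> b \<Longrightarrow> \<bar>D y - D x\<bar> \<le> \<bar>g y - g x\<bar> * (P y - P x)"
  shows "D b = D a"
proof -
  have P_le: "P x \<le> P y" if "a \<le> x" "x \<le> y" "y \<le> b" for x y
    using P that by (auto intro: mono_onD)
  have bound: "\<bar>D b - D a\<bar> \<le> e * (P b - P a)" if "e > 0" for e
  proof (cases "a = b")
    case False
    then have ab: "a < b" using \<open>a \<le> b\<close> by simp
    obtain d where "d > 0" and close:
      "\<And>x y. x \<in> {a..b} \<Longrightarrow> y \<in> {a..b} \<Longrightarrow> dist y x < d \<Longrightarrow> dist (g y) (g x) < e"
      using compact_uniformly_continuous[OF g compact_Icc] \<open>e > 0\<close>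
      unfolding uniformly_continuous_on_def by metis
    obtain N :: nat where N: "(b - a) / d < real N" using reals_Archimedean2 by blast
    then have "N > 0" using ab \<open>d > 0\<close> by (intro Nat.gr0I) (auto simp: field_simps)
    define h where "h = (b - a) / real N"
    define x where "x i = a + real i * h" for i
    have h: "0 < h" "h < d" using ab \<open>d > 0\<close> \<open>N > 0\<close> N by (auto simp: h_def field_simps)
    have x_ends: "x 0 = a" "x N = b" using \<open>N > 0\<close> by (auto simp: x_def h_def)
    have x_in: "a \<le> x i" "x i \<le> b" if "i \<le> N" for i
    proof -
      have "real i * h \<le> real N * h" using that h by (intro mult_right_mono) auto
      then show "a \<le> x i" "x i \<le> b" using h x_ends by (auto simp: x_def)
    qed
    have piece: "\<bar>D (x (Suc i)) - D (x i)\<bar> \<le> e * (P (x (Suc i)) - P (x i))" if "i < N" for i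
    proof -
      have xs: "x (Suc i) = x i + h" by (simp add: x_def algebra_simps)
      have "\<bar>g (x (Suc i)) - g (x i)\<bar> < e"
        using close[of "x i" "x (Suc i)"] x_in[of i] x_in[of "Suc i"] that h
        by (auto simp: xs dist_real_def)
      moreover have "0 \<le> P (x (Suc i)) - P (x i)"
        using P_le x_in[of i] x_in[of "Suc i"] that h by (simp add: xs)
      ultimately have "\<bar>g (x (Suc i)) - g (x i)\<bar> * (P (x (Suc i)) - P (x i)) \<le> e * (P (x (Suc i)) - P (x i))"
        by (intro mult_right_mono) auto
      then show ?thesis
        using dom[of "x i" "x (Suc i)"] x_in[of i] x_in[of "Suc i"] that h by (simp add: xs)
    qed
    have "\<bar>\<Sum>i<N. D (x (Suc i)) - D (x i)\<bar> \<le> (\<Sum>i<N. e * (P (x (Suc i)) - P (x i)))"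
      using piece by (intro order_trans[OF sum_abs] sum_mono) auto
    then show ?thesis
      by (simp add: sum_lessThan_telescope[of "\<lambda>i. D (x i)"]
          sum_lessThan_telescope[of "\<lambda>i. P (x i)"] x_ends flip: sum_distrib_left)
  qed simp
  have "\<bar>D b - D a\<bar> \<le> 0 + e" if "e > 0" for e
  proof -
    have PP: "0 \<le> P b - P a" using P_le \<open>a \<le> b\<close> by simp
    have "\<bar>D b - D a\<bar> \<le> e / (P b - P a + 1) * (P b - P a)"
      using bound[of "e / (P b - P a + 1)"] that PP by simp
    also have "\<dots> \<le> e" using PP that by (simp add: field_simps)
    finally show ?thesis by simp
  qed
  then show ?thesis using field_le_epsilon[of "\<bar>D b - D a\<bar>" 0] by simp
qed

lemma common_chord_slope:
  fixes g R :: "real \<Rightarrow> real"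
  assumes R: "strict_mono_on S R"
    and same_end: "\<And>a b t. a \<in> S \<Longrightarrow> b \<in> S \<Longrightarrow> t \<in> S \<Longrightarrow> a < t \<Longrightarrow> b < t \<Longrightarrow>
        (g t - g a) / (R t - R a) = (g t - g b) / (R t - R b)"
  shows "\<exists>\<beta>. \<forall>a\<in>S. \<forall>b\<in>S. a < b \<longrightarrow> g b - g a = \<beta> * (R b - R a)"
proof -
  define sl where "sl a b = (g b - g a) / (R b - R a)" for a b
  have sl_end: "sl a t = sl b t" if "a \<in> S" "b \<in> S" "t \<in> S" "a < t" "b < t" for a b t
    unfolding sl_def using that by (rule same_end)
  have chord: "g b - g a = sl a b * (R b - R a)" if "a \<in> S" "b \<in> S" "a < b" for a b
  proof -
    have "R a < R b" using R that by (auto simp: strict_mono_on_def)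
    then show ?thesis by (simp add: sl_def)
  qed
  have three: "sl a b = sl a c" if "a \<in> S" "b \<in> S" "c \<in> S" "a < b" "b < c" for a b c
  proof -
    have "R a < R b" using R that by (auto simp: strict_mono_on_def)
    have "g b - g a = (g c - g a) - (g c - g b)" by simp
    also have "\<dots> = sl a c * (R c - R a) - sl a c * (R c - R b)"
      using chord[of a c] chord[of b c] sl_end[of a b c] that by simp
    also have "\<dots> = sl a c * (R b - R a)" by (simp add: algebra_simps)
    finally show ?thesis using \<open>R a < R b\<close> by (simp add: sl_def)
  qed
  have pairs: "sl a b = sl c d"
    if "a \<in> S" "b \<in> S" "c \<in> S" "d \<in> S" "a < b" "c < d" for a b c d
  proof (cases b d rule: linorder_cases)
    case less then show ?thesis using three[of a b d] sl_end[of a c d] that by simp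
  next
    case equal then show ?thesis using sl_end[of a c d] that by simp
  next
    case greater then show ?thesis using three[of c d b] sl_end[of a c b] that by simp
  qed
  show ?thesis
  proof (cases "\<exists>a\<in>S. \<exists>b\<in>S. a < b")
    case True
    then obtain a0 b0 where ab0: "a0 \<in> S" "b0 \<in> S" "a0 < b0" by blast
    show ?thesis
    proof (intro exI ballI impI)
      fix a b assume "a \<in> S" "b \<in> S" "a < b"
      then show "g b - g a = sl a0 b0 * (R b - R a)" using chord pairs[OF _ _ ab0(1,2) _ ab0(3)] by simp
    qed
  qed auto
qed

lemma weighted_power_mean:
  fixes a b :: real
  assumes "0 \<le> a" "0 \<le> b"
  shows "real (k + 1) * a ^ k * b \<le> real k * a ^ (k + 1) + b ^ (k + 1)"
proof (induction k)
  case (Suc k)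
  have "0 \<le> (a - b) * (a ^ (k + 1) - b ^ (k + 1))"
  proof (cases "a \<le> b")
    case True
    then have "a ^ (k + 1) \<le> b ^ (k + 1)" using assms by (intro power_mono) auto
    then show ?thesis using True by (intro mult_nonpos_nonpos) auto
  next
    case False
    then have "b ^ (k + 1) \<le> a ^ (k + 1)" using assms by (intro power_mono) auto
    then show ?thesis using False by (intro mult_nonneg_nonneg) auto
  qed
  moreover have "a * (real (k + 1) * a ^ k * b) \<le> a * (real k * a ^ (k + 1) + b ^ (k + 1))"
    using Suc.IH assms by (intro mult_left_mono) auto
  moreover have "real (Suc k + 1) * a ^ Suc k * b = a * (real (k + 1) * a ^ k * b) + a * a ^ k * b"
    and "real (Suc k) * a ^ (Suc k + 1) + b ^ (Suc k + 1) =
      a * (real k * a ^ (k + 1) + b ^ (k + 1)) + (a - b) * (a ^ (k + 1) - b ^ (k + 1)) + a * a ^ k * b"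
    by (simp_all add: algebra_simps)
  ultimately show ?case by linarith
qed simp

text \<open>The explicit candidate K(Z) = C Z^k (k (Z + h) + h) / (k + 1) for the partial moment obeys
  the same increment bounds as partial moments do.\<close>
lemma power_moment_increment:
  fixes X Y C h :: real and k :: nat
  assumes "0 \<le> X" "X \<le> Y" "0 \<le> C"
  defines "K \<equiv> \<lambda>Z. C * Z ^ k * (real k * (Z + h) + h) / (real k + 1)"
  shows "(X + h) * (C * Y ^ k - C * X ^ k) \<le> K Y - K X"
    and "K Y - K X \<le> (Y + h) * (C * Y ^ k - C * X ^ k)"
proof -
  have mean1: "real (k + 1) * Y ^ k * X \<le> real k * Y ^ (k + 1) + X ^ (k + 1)"
    and mean2: "real (k + 1) * X ^ k * Y \<le> real k * X ^ (k + 1) + Y ^ (k + 1)"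
    using weighted_power_mean assms by auto
  have scaled: "(real k + 1) * K Z = C * Z ^ k * (real k * (Z + h) + h)" for Z
    unfolding K_def by simp
  have key: "(real k + 1) * (K Y - K X) =
      C * (real k * (Y * Y ^ k - X * X ^ k)) + (real k + 1) * C * h * (Y ^ k - X ^ k)"
    unfolding right_diff_distrib scaled by (simp add: algebra_simps)
  have "(real k + 1) * ((K Y - K X) - (X + h) * (C * Y ^ k - C * X ^ k)) =
      C * (real k * Y ^ (k + 1) + X ^ (k + 1) - real (k + 1) * Y ^ k * X)"
    using key by (simp add: algebra_simps)
  also have "\<dots> \<ge> 0" using mean1 assms by simp
  finally show "(X + h) * (C * Y ^ k - C * X ^ k) \<le> K Y - K X"
    by (simp add: zero_le_mult_iff add_pos_nonneg)
  have "(real k + 1) * ((Y + h) * (C * Y ^ k - C * X ^ k) - (K Y - K X)) =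
      C * (real k * X ^ (k + 1) + Y ^ (k + 1) - real (k + 1) * X ^ k * Y)"
    using key by (simp add: algebra_simps)
  also have "\<dots> \<ge> 0" using mean2 assms by simp
  finally show "K Y - K X \<le> (Y + h) * (C * Y ^ k - C * X ^ k)"
    by (simp add: zero_le_mult_iff add_pos_nonneg)
qed

text \<open>Inserting the identity E = (k b + a) / (k + 1) into the increment bounds.\<close>
lemma identity_increment_inequalities:
  fixes p p' a b b' :: real and k :: nat
  assumes lower: "b * (p' - p) \<le> p' * ((real k * b' + a) / (real k + 1)) - p * ((real k * b + a) / (real k + 1))"
    and upper: "p' * ((real k * b' + a) / (real k + 1)) - p * ((real k * b + a) / (real k + 1)) \<le> b' * (p' - p)"
  shows "real k * p * (b' - b) \<le> (p' - p) * (b' - a)" and "(p' - p) * (b - a) \<le> real k * p' * (b' - b)"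
proof -
  have "p' * ((real k * b' + a) / (real k + 1)) - p * ((real k * b + a) / (real k + 1)) =
      (p' * (real k * b' + a) - p * (real k * b + a)) / (real k + 1)"
    by (simp add: diff_divide_distrib)
  then have scaled: "(real k + 1) * (p' * ((real k * b' + a) / (real k + 1)) - p * ((real k * b + a) / (real k + 1))) =
      p' * (real k * b' + a) - p * (real k * b + a)"
    by simp
  have "(real k + 1) * (b * (p' - p)) \<le> p' * (real k * b' + a) - p * (real k * b + a)"
    unfolding scaled[symmetric] using lower by (intro mult_left_mono) auto
  then show "(p' - p) * (b - a) \<le> real k * p' * (b' - b)" by (simp add: algebra_simps)
  have "p' * (real k * b' + a) - p * (real k * b + a) \<le> (real k + 1) * (b' * (p' - p))"
    unfolding scaled[symmetric] using upper by (intro mult_left_mono) auto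
  then show "real k * p * (b' - b) \<le> (p' - p) * (b' - a)" by (simp add: algebra_simps)
qed

lemma slope_between_power_quotients:
  fixes a b c u v w :: real and k :: nat
  assumes "a < b" "b < c" "k \<ge> 1"
    and lower: "real k * (b - a) ^ k * (w - v) \<le> ((c - a) ^ k - (b - a) ^ k) * (w - u)"
    and upper: "((c - a) ^ k - (b - a) ^ k) * (v - u) \<le> real k * (c - a) ^ k * (w - v)"
  defines "q \<equiv> ((c - a) ^ k - (b - a) ^ k) / (c - b)"
  shows "q * (v - u) / (real k * (c - a) ^ k) \<le> (w - v) / (c - b)"
    and "(w - v) / (c - b) \<le> q * (w - u) / (real k * (b - a) ^ k)"
proof -
  have pos: "0 < real k * (c - a) ^ k" "0 < real k * (b - a) ^ k" "0 < c - b"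
    using assms(1-3) by auto
  then have nz: "real k * (c - a) ^ k \<noteq> 0" "real k * (b - a) ^ k \<noteq> 0" by linarith+
  have "q * (v - u) / (real k * (c - a) ^ k) =
      ((c - a) ^ k - (b - a) ^ k) * (v - u) / (real k * (c - a) ^ k * (c - b))"
    unfolding q_def by (simp add: field_simps)
  also have "\<dots> \<le> real k * (c - a) ^ k * (w - v) / (real k * (c - a) ^ k * (c - b))"
    using upper pos by (intro divide_right_mono) auto
  also have "\<dots> = (w - v) / (c - b)" by (rule mult_divide_mult_cancel_left[OF nz(1)])
  finally show "q * (v - u) / (real k * (c - a) ^ k) \<le> (w - v) / (c - b)" .
  have "(w - v) / (c - b) = real k * (b - a) ^ k * (w - v) / (real k * (b - a) ^ k * (c - b))"
    by (rule mult_divide_mult_cancel_left[OF nz(2), symmetric])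
  also have "\<dots> \<le> ((c - a) ^ k - (b - a) ^ k) * (w - u) / (real k * (b - a) ^ k * (c - b))"
    using lower pos by (intro divide_right_mono) auto
  also have "\<dots> = q * (w - u) / (real k * (b - a) ^ k)" unfolding q_def by (simp add: field_simps)
  finally show "(w - v) / (c - b) \<le> q * (w - u) / (real k * (b - a) ^ k)" .
qed

text \<open>Letting t' tend to t from the right, both difference quotients converge to k (R t - R s)^(k-1), so
  the right derivative of g with respect to R at t equals the chord slope from s to t.\<close>
lemma hazard_slope_right_limit:
  fixes R g :: "real \<Rightarrow> real" and k :: nat
  assumes "k \<ge> 1" and R: "isCont R t" and g: "isCont g t" and "R s < R t"
    and ev: "eventually (\<lambda>t'. R t < R t' \<and>
        real k * (R t - R s) ^ k * (g t' - g t) \<le> ((R t' - R s) ^ k - (R t - R s) ^ k) * (g t' - g s) \<and>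
        ((R t' - R s) ^ k - (R t - R s) ^ k) * (g t - g s) \<le> real k * (R t' - R s) ^ k * (g t' - g t))
      (at_right t)"
  shows "((\<lambda>t'. (g t' - g t) / (R t' - R t)) \<longlongrightarrow> (g t - g s) / (R t - R s)) (at_right t)"
proof -
  define a b where "a = R s" and "b = R t"
  define q where "q t' = ((R t' - a) ^ k - (b - a) ^ k) / (R t' - b)" for t'
  define L where "L = real k * (b - a) ^ (k - 1) * (g t - g s) / (real k * (b - a) ^ k)"
  have "a < b" using \<open>R s < R t\<close> by (simp add: a_def b_def)
  have R_lim: "(R \<longlongrightarrow> b) (at_right t)"
    using R unfolding b_def isCont_def by (rule filterlim_mono) (simp_all add: at_within_le_at)
  have g_lim: "(g \<longlongrightarrow> g t) (at_right t)"
    using g unfolding isCont_def by (rule filterlim_mono) (simp_all add: at_within_le_at)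
  have R_at: "filterlim R (at b) (at_right t)"
    by (rule filterlim_atI[OF R_lim]) (rule eventually_mono[OF ev], auto simp: b_def)
  have "((\<lambda>x. (x - a) ^ k) has_field_derivative real k * (b - a) ^ (k - 1)) (at b)"
    by (auto intro!: derivative_eq_intros)
  then have "((\<lambda>y. ((y - a) ^ k - (b - a) ^ k) / (y - b)) \<longlongrightarrow> real k * (b - a) ^ (k - 1)) (at b)"
    by (simp add: has_field_derivative_iff)
  from filterlim_compose[OF this R_at]
  have q_lim: "(q \<longlongrightarrow> real k * (b - a) ^ (k - 1)) (at_right t)" unfolding q_def .
  have split_power: "(b - a) ^ k = (b - a) ^ (k - 1) * (b - a)"
    using \<open>k \<ge> 1\<close> by (cases k) (auto simp: power_Suc2)
  have "L = (g t - g s) / (b - a)"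
    using \<open>a < b\<close> \<open>k \<ge> 1\<close> unfolding L_def split_power by (simp add: field_simps)
  then have L: "L = (g t - g s) / (R t - R s)" by (simp add: a_def b_def)
  have lower_lim: "((\<lambda>t'. q t' * (g t - g s) / (real k * (R t' - a) ^ k)) \<longlongrightarrow> L) (at_right t)"
    unfolding L_def using \<open>a < b\<close> \<open>k \<ge> 1\<close> by (intro tendsto_intros q_lim R_lim) auto
  have upper_lim: "((\<lambda>t'. q t' * (g t' - g s) / (real k * (b - a) ^ k)) \<longlongrightarrow> L) (at_right t)"
    unfolding L_def using \<open>a < b\<close> \<open>k \<ge> 1\<close> by (intro tendsto_intros q_lim g_lim) auto
  have between: "eventually (\<lambda>t'. q t' * (g t - g s) / (real k * (R t' - a) ^ k) \<le> (g t' - g t) / (R t' - R t) \<and>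
      (g t' - g t) / (R t' - R t) \<le> q t' * (g t' - g s) / (real k * (b - a) ^ k)) (at_right t)"
    using ev by eventually_elim
      (use slope_between_power_quotients[OF \<open>a < b\<close> _ \<open>k \<ge> 1\<close>] in \<open>auto simp: q_def a_def b_def\<close>)
  show ?thesis unfolding L[symmetric]
    by (rule tendsto_sandwich[OF _ _ lower_lim upper_lim]) (use between in \<open>auto elim: eventually_mono\<close>)
qed

section \<open>The support of a continuous distribution function\<close>

definition open_support :: "(real \<Rightarrow> real) \<Rightarrow> real set" where
  "open_support G = {x. lG G < ereal x \<and> ereal x < rG G}"

lemma cont_dist_fun_bounds:
  assumes "cont_dist_fun G"
  shows "0 \<le> G x" "G x \<le> 1"
proof -
  have m: "mono G" and "(G \<longlongrightarrow> 0) at_bot" "(G \<longlongrightarrow> 1) at_top"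
    using assms by (auto simp: cont_dist_fun_def)
  moreover have "eventually (\<lambda>y. G y \<le> G x) at_bot" "eventually (\<lambda>y. G x \<le> G y) at_top"
    unfolding eventually_at_bot_linorder eventually_at_top_linorder by (auto intro: monoD[OF m])
  ultimately show "0 \<le> G x" "G x \<le> 1" by (auto intro: tendsto_upperbound tendsto_lowerbound)
qed

lemma cdf_less_one_on_support:
  assumes "mono G" "x \<in> open_support G"
  shows "G x < 1"
proof -
  from assms(2) obtain z where z: "z \<in> {ereal y | y. G y < 1}" "ereal x < z"
    unfolding open_support_def rG_def less_Sup_iff by blast
  then obtain y where "z = ereal y" "G y < 1" by auto
  then show ?thesis using z monoD[OF assms(1), of x y] by auto
qed

lemma interval_subset_open_support:
  assumes "x \<in> open_support G" "y \<in> open_support G"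
  shows "{x..y} \<subseteq> open_support G"
proof
  fix z assume "z \<in> {x..y}"
  then have "ereal x \<le> ereal z" "ereal z \<le> ereal y" by auto
  moreover have "lG G < ereal x" "ereal y < rG G" using assms by (auto simp: open_support_def)
  ultimately show "z \<in> open_support G" unfolding open_support_def
    using order_less_le_trans order_le_less_trans by blast
qed

lemma open_open_support: "open (open_support G)"
proof -
  have "open_support G = {x. lG G < ereal x} \<inter> {x. ereal x < rG G}"
    unfolding open_support_def by auto
  moreover have "continuous_on UNIV ereal" by (intro continuous_intros)
  ultimately show ?thesis
    by (auto intro!: open_Collect_less continuous_intros)
qed

lemma eventually_right_in_open_support:
  assumes "t \<in> open_support G"
  shows "eventually (\<lambda>t'. t' \<in> open_support G \<and> t < t') (at_right t)"
proof -
  have "eventually (\<lambda>t'. t' \<in> open_support G) (at t)"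
    by (rule eventually_at_in_open'[OF open_open_support assms])
  then have "eventually (\<lambda>t'. t' \<in> open_support G) (at_right t)"
    by (rule filter_leD[OF at_within_le_at, rotated])
  then show ?thesis using eventually_at_right_less by (rule eventually_conj)
qed

lemma left_end_filter:
  assumes "x0 \<in> open_support G"
  shows "eventually (\<lambda>y. y \<in> open_support G) (at_right_e (lG G))" "at_right_e (lG G) \<noteq> bot"
proof -
  have x0: "lG G < ereal x0" "ereal x0 < rG G" using assms by (auto simp: open_support_def)
  have below_x0: "y \<in> open_support G" if "lG G < ereal y" "y \<le> x0" for y
  proof -
    have "ereal y \<le> ereal x0" using that(2) by simp
    then show ?thesis using order_le_less_trans[OF _ x0(2)] that(1) unfolding open_support_def by blast
  qed
  show "eventually (\<lambda>y. y \<in> open_support G) (at_right_e (lG G))"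
  proof (cases "lG G")
    case (real l)
    then have "l < x0" using x0 by simp
    have "y \<in> open_support G" if "y \<in> {l<..<x0}" for y
      using that real by (intro below_x0) auto
    then show ?thesis unfolding at_right_e_def using real eventually_at_right_real[OF \<open>l < x0\<close>]
      by (auto elim: eventually_mono)
  next
    case MInf
    then have "\<forall>y\<le>x0. y \<in> open_support G" by (auto intro: below_x0)
    then show ?thesis using MInf by (auto simp: at_right_e_def eventually_at_bot_linorder)
  qed (use x0 in simp)
  show "at_right_e (lG G) \<noteq> bot"
    by (cases "lG G") (auto simp: at_right_e_def trivial_limit_at_right_real)
qed

text \<open>G tends to 0 at the left end point of the support (continuity of G when l_G is finite).\<close>
lemma cdf_tendsto_zero_at_left_end:
  assumes G: "cont_dist_fun G" and "x0 \<in> open_support G"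
  shows "(G \<longlongrightarrow> 0) (at_right_e (lG G))"
proof (cases "lG G")
  case (real l)
  have cont: "isCont G l" using G by (simp add: cont_dist_fun_def continuous_on_eq_continuous_at)
  have "G y \<le> 0" if "y < l" for y
  proof (rule ccontr)
    assume "\<not> G y \<le> 0"
    then have "lG G \<le> ereal y" unfolding lG_def by (intro Inf_lower) auto
    then show False using real that by simp
  qed
  then have "eventually (\<lambda>y. G y \<le> 0) (at_left l)"
    using eventually_at_left_real[of "l - 1" l] by (auto elim!: eventually_mono)
  moreover have "(G \<longlongrightarrow> G l) (at_left l)"
    using cont unfolding isCont_def by (rule filterlim_mono) (simp_all add: at_within_le_at)
  ultimately have "G l \<le> 0"
    by (intro tendsto_upperbound[of G "G l" "at_left l"]) auto
  then have "G l = 0" using cont_dist_fun_bounds(1)[OF G, of l] by simp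
  moreover have "(G \<longlongrightarrow> G l) (at_right l)"
    using cont unfolding isCont_def by (rule filterlim_mono) (simp_all add: at_within_le_at)
  ultimately show ?thesis using real by (simp add: at_right_e_def)
next
  case MInf
  then show ?thesis using G by (simp add: at_right_e_def cont_dist_fun_def)
qed (use \<open>x0 \<in> open_support G\<close> in \<open>simp add: open_support_def\<close>)

section \<open>Sufficiency of the exponential form\<close>

text \<open>Sufficiency, core: if R - R s = c (g - g s) on [s,t], then J_s and the explicit K (g - g s) have
  dominated increments of the same kind, so they differ by a constant, which vanishes at s.\<close>
lemma cond_exp_of_affine_hazard:
  assumes G: "mono G" "continuous_on UNIV G" "G t < 1" and "k \<ge> 1" "s < t" "c > 0"
    and g: "continuous_on {s..t} g" "strict_mono_on {s..t} g"
    and hazard: "\<And>x. x \<in> {s..t} \<Longrightarrow> hazR G x - hazR G s = c * (g x - g s)"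
  shows "cond_exp_rec G k g s t = (real k * g t + g s) / (real k + 1)"
proof -
  let ?P = "hazard_mass G k s" and ?J = "partial_moment G k g s"
  define K where "K Z = c ^ k * Z ^ k * (real k * (Z + g s) + g s) / (real k + 1)" for Z
  define D where "D x = ?J x - K (g x - g s)" for x
  have g_mono: "mono_on {s..t} g" using g(2) by (rule strict_mono_on_imp_mono_on)
  have g_ge: "g s \<le> g x" if "x \<in> {s..t}" for x using mono_onD[OF g_mono] that by auto
  have G_less_1: "G x < 1" if "x \<le> t" for x using monoD[OF G(1) that] G(3) by simp
  have G_strict: "strict_mono_on {s..t} G"
  proof (rule strict_mono_onI)
    fix x y assume xy: "x \<in> {s..t}" "y \<in> {s..t}" "x < y"
    have "c * (g x - g s) < c * (g y - g s)"
      using strict_mono_onD[OF g(2) xy] \<open>c > 0\<close> by (intro mult_strict_left_mono) auto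
    then have "hazR G x < hazR G y" using hazard[OF xy(1)] hazard[OF xy(2)] by simp
    then show "G x < G y" using hazR_less_iff G_less_1 xy by auto
  qed
  have P: "?P x = c ^ k * (g x - g s) ^ k" if "x \<in> {s..t}" for x
    using hazard[OF that] by (simp add: hazard_mass_def power_mult_distrib)
  have P_mono: "mono_on {s..t} ?P"
    by (rule mono_onI) (use P g_ge \<open>c > 0\<close> in \<open>auto intro!: mult_left_mono power_mono mono_onD[OF g_mono]\<close>)
  have increments: "\<bar>D y - D x\<bar> \<le> \<bar>g y - g x\<bar> * (?P y - ?P x)" if xy: "s \<le> x" "x < y" "y \<le> t" for x y
  proof -
    have sub: "{s..y} \<subseteq> {s..t}" using xy by auto
    have J: "g x * (?P y - ?P x) \<le> ?J y - ?J x \<and> ?J y - ?J x \<le> g y * (?P y - ?P x)"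
      using partial_moment_increment[OF G(1,2) G_less_1[OF xy(3)] monotone_on_subset[OF G_strict sub]
          \<open>k \<ge> 1\<close> continuous_on_subset[OF g(1) sub] mono_on_subset[OF g_mono sub] xy(1,2)] .
    have "g x - g s \<le> g y - g s" using mono_onD[OF g_mono] xy by auto
    then have "g x * (?P y - ?P x) \<le> K (g y - g s) - K (g x - g s) \<and>
        K (g y - g s) - K (g x - g s) \<le> g y * (?P y - ?P x)"
      using power_moment_increment[where X="g x - g s" and Y="g y - g s" and C="c ^ k" and h="g s" and k=k]
        g_ge[of x] \<open>c > 0\<close> P[of x] P[of y] xy
      unfolding K_def by simp
    then have "\<bar>D y - D x\<bar> \<le> (g y - g x) * (?P y - ?P x)"
      using J unfolding D_def abs_le_iff by (simp add: algebra_simps)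
    also have "\<dots> \<le> \<bar>g y - g x\<bar> * (?P y - ?P x)"
      using mono_onD[OF P_mono, of x y] xy by (intro mult_right_mono) auto
    finally show ?thesis .
  qed
  have "D t = D s"
    using dominated_increments_imp_constant[OF less_imp_le[OF \<open>s < t\<close>] g(1) P_mono] increments by blast
  also have "D s = 0" using \<open>k \<ge> 1\<close> by (simp add: D_def K_def partial_moment_def hazard_mass_def zero_power)
  finally have eq: "?P t * cond_exp_rec G k g s t = ?P t * ((real k * g t + g s) / (real k + 1))"
    using P[of t] \<open>s < t\<close> by (simp add: D_def K_def partial_moment_def algebra_simps)
  moreover have "?P t \<noteq> 0" using P[of t] strict_mono_onD[OF g(2), of s t] \<open>s < t\<close> \<open>c > 0\<close> by simp
  ultimately show ?thesis using mult_left_cancel by blast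
qed

text \<open>Sufficiency: the exponential form of G makes R affine in g.\<close>
lemma cond_exp_identity_of_exponential:
  fixes G g :: "real \<Rightarrow> real" and k :: nat and gl c :: real
  defines "S \<equiv> open_support G"
  assumes G: "cont_dist_fun G" and "k \<ge> 1"
    and g: "continuous_on S g" "strict_mono_on S g" and "c > 0"
    and exponential: "\<forall>y\<in>S. G y = 1 - exp (- c * (g y - gl))"
    and st: "s \<in> S" "t \<in> S" "s < t"
  shows "G s < G t \<and> cond_exp_rec G k g s t = (real k * g t + g s) / (real k + 1)"
proof
  have sub: "{s..t} \<subseteq> S" using interval_subset_open_support st(1,2) unfolding S_def .
  have "g s < g t" using strict_mono_onD[OF g(2) st] .
  then show "G s < G t" using exponential st \<open>c > 0\<close> by simp
  have hazard: "hazR G x = c * (g x - gl)" if "x \<in> S" for x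
    using exponential that by (simp add: hazR_def)
  show "cond_exp_rec G k g s t = (real k * g t + g s) / (real k + 1)"
  proof (rule cond_exp_of_affine_hazard)
    show "mono G" "continuous_on UNIV G" using G by (auto simp: cont_dist_fun_def)
    show "G t < 1" using exponential st(2) by simp
    show "continuous_on {s..t} g" "strict_mono_on {s..t} g"
      using continuous_on_subset[OF g(1) sub] monotone_on_subset[OF g(2) sub] .
    show "hazR G x - hazR G s = c * (g x - g s)" if "x \<in> {s..t}" for x
      using hazard[of x] hazard[OF st(1)] sub that by (auto simp: algebra_simps)
  qed (use \<open>k \<ge> 1\<close> st(3) \<open>c > 0\<close> in auto)
qed

section \<open>Necessity of the exponential form\<close>

lemma cond_exp_identity_slope_limit:
  fixes G g :: "real \<Rightarrow> real" and k :: nat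
  defines "S \<equiv> open_support G"
  assumes G: "cont_dist_fun G" and "k \<ge> 1"
    and g: "continuous_on S g" "strict_mono_on S g"
    and H: "\<And>s t. s \<in> S \<Longrightarrow> t \<in> S \<Longrightarrow> s < t \<Longrightarrow>
      G s < G t \<and> cond_exp_rec G k g s t = (real k * g t + g s) / (real k + 1)"
    and st: "s \<in> S" "t \<in> S" "s < t"
  shows "((\<lambda>t'. (g t' - g t) / (hazR G t' - hazR G t)) \<longlongrightarrow> (g t - g s) / (hazR G t - hazR G s)) (at_right t)"
proof -
  let ?R = "hazR G" and ?P = "hazard_mass G k s"
  have mono: "mono G" and cont: "continuous_on UNIV G" using G by (auto simp: cont_dist_fun_def)
  have less_1: "G x < 1" if "x \<in> S" for x using cdf_less_one_on_support[OF mono] that by (simp add: S_def)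
  have G_strict: "strict_mono_on S G" using H by (auto intro: strict_mono_onI)
  have R_less: "?R x < ?R y" if "x \<in> S" "y \<in> S" "x < y" for x y
    using hazR_strict_mono[of G y x, OF less_1[OF that(2)] strict_mono_onD[OF G_strict that]] .
  have identity: "partial_moment G k g s x = ?P x * ((real k * g x + g s) / (real k + 1))"
    if "x \<in> S" "s < x" for x
    using H[OF st(1) that] by (simp add: partial_moment_def)
  have near: "eventually (\<lambda>t'. t' \<in> S \<and> t < t') (at_right t)"
    using eventually_right_in_open_support st(2) unfolding S_def by blast
  have "eventually (\<lambda>t'. ?R t < ?R t' \<and>
      real k * (?R t - ?R s) ^ k * (g t' - g t) \<le> ((?R t' - ?R s) ^ k - (?R t - ?R s) ^ k) * (g t' - g s) \<and>
      ((?R t' - ?R s) ^ k - (?R t - ?R s) ^ k) * (g t - g s) \<le> real k * (?R t' - ?R s) ^ k * (g t' - g t))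
    (at_right t)"
    using near
  proof eventually_elim
    case (elim t')
    then have "t' \<in> S" "t < t'" by auto
    have sub: "{s..t'} \<subseteq> S" using interval_subset_open_support st(1) \<open>t' \<in> S\<close> unfolding S_def .
    have increment: "g t * (?P t' - ?P t) \<le> partial_moment G k g s t' - partial_moment G k g s t \<and>
        partial_moment G k g s t' - partial_moment G k g s t \<le> g t' * (?P t' - ?P t)"
      by (rule partial_moment_increment[OF mono cont less_1[OF \<open>t' \<in> S\<close>]
          monotone_on_subset[OF G_strict sub] \<open>k \<ge> 1\<close> continuous_on_subset[OF g(1) sub]
          mono_on_subset[OF strict_mono_on_imp_mono_on[OF g(2)] sub]])
        (use st \<open>t < t'\<close> in auto)
    have "s < t'" using st(3) \<open>t < t'\<close> by simp
    have "g t * (?P t' - ?P t) \<le>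
          ?P t' * ((real k * g t' + g s) / (real k + 1)) - ?P t * ((real k * g t + g s) / (real k + 1)) \<and>
        ?P t' * ((real k * g t' + g s) / (real k + 1)) - ?P t * ((real k * g t + g s) / (real k + 1)) \<le>
          g t' * (?P t' - ?P t)"
      using increment unfolding identity[OF st(2,3)] identity[OF \<open>t' \<in> S\<close> \<open>s < t'\<close>] .
    then have "real k * ?P t * (g t' - g t) \<le> (?P t' - ?P t) * (g t' - g s) \<and>
        (?P t' - ?P t) * (g t - g s) \<le> real k * ?P t' * (g t' - g t)"
      using identity_increment_inequalities by blast
    then show ?case using R_less[OF st(2) \<open>t' \<in> S\<close> \<open>t < t'\<close>] unfolding hazard_mass_def by blast
  qed
  moreover have "isCont g t"
    using g(1) st(2) unfolding S_def by (simp add: continuous_on_eq_continuous_at[OF open_open_support])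
  ultimately show ?thesis
    by (intro hazard_slope_right_limit[OF \<open>k \<ge> 1\<close> isCont_hazR[OF cont less_1[OF st(2)]]] R_less st)
qed

text \<open>Necessity, final step: if g is affine in R with slope beta > 0 on the support, then since R tends
  to 0 at the left end point, g = g(l_G+) + beta R, i.e. G = 1 - exp(-(g - g(l_G+)) / beta).\<close>
lemma exponential_of_affine_hazard:
  fixes G g :: "real \<Rightarrow> real"
  defines "S \<equiv> open_support G"
  assumes G: "cont_dist_fun G" and g_lim: "(g \<longlongrightarrow> gl) (at_right_e (lG G))"
    and "\<beta> > 0" and "x0 \<in> S"
    and affine: "\<forall>a\<in>S. \<forall>b\<in>S. a < b \<longrightarrow> g b - g a = \<beta> * (hazR G b - hazR G a)"
  shows "\<forall>y\<in>S. G y = 1 - exp (- (1 / \<beta>) * (g y - gl))"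
proof -
  let ?R = "hazR G" and ?F = "at_right_e (lG G)"
  have line: "g y = g x0 + \<beta> * (?R y - ?R x0)" if "y \<in> S" for y
  proof (cases y x0 rule: linorder_cases)
    case less
    then have "g x0 - g y = \<beta> * (?R x0 - ?R y)" using affine \<open>x0 \<in> S\<close> that by blast
    then show ?thesis by (simp add: algebra_simps)
  next
    case greater
    then have "g y - g x0 = \<beta> * (?R y - ?R x0)" using affine \<open>x0 \<in> S\<close> that by blast
    then show ?thesis by (simp add: algebra_simps)
  qed simp
  have "(G \<longlongrightarrow> 0) ?F" using cdf_tendsto_zero_at_left_end[OF G] \<open>x0 \<in> S\<close> by (simp add: S_def)
  then have "((\<lambda>y. - ln (1 - G y)) \<longlongrightarrow> - ln (1 - 0)) ?F" by (intro tendsto_intros) auto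
  then have "(?R \<longlongrightarrow> 0) ?F" by (simp add: hazR_def[abs_def])
  then have "((\<lambda>y. g x0 + \<beta> * (?R y - ?R x0)) \<longlongrightarrow> g x0 + \<beta> * (0 - ?R x0)) ?F"
    by (intro tendsto_intros)
  then have line_lim: "((\<lambda>y. g x0 + \<beta> * (?R y - ?R x0)) \<longlongrightarrow> g x0 - \<beta> * ?R x0) ?F" by simp
  have "eventually (\<lambda>y. y \<in> S) ?F" using left_end_filter(1) \<open>x0 \<in> S\<close> by (simp add: S_def)
  then have "eventually (\<lambda>y. g x0 + \<beta> * (?R y - ?R x0) = g y) ?F"
    by (rule eventually_mono) (rule line[symmetric])
  then have "(g \<longlongrightarrow> g x0 - \<beta> * ?R x0) ?F" by (rule Lim_transform_eventually[OF line_lim])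
  then have gl: "gl = g x0 - \<beta> * ?R x0"
    using tendsto_unique[OF left_end_filter(2)[of x0 G] g_lim] \<open>x0 \<in> S\<close> by (simp add: S_def)
  show ?thesis
  proof
    fix y assume "y \<in> S"
    have "G y < 1"
      using cdf_less_one_on_support[of G y] G \<open>y \<in> S\<close> by (simp add: S_def cont_dist_fun_def)
    have "g y - gl = \<beta> * ?R y" using line[OF \<open>y \<in> S\<close>] gl by (simp add: algebra_simps)
    then have "- (1 / \<beta>) * (g y - gl) = ln (1 - G y)" using \<open>\<beta> > 0\<close> by (simp add: hazR_def)
    then show "G y = 1 - exp (- (1 / \<beta>) * (g y - gl))" using \<open>G y < 1\<close> by simp
  qed
qed

lemma exponential_of_cond_exp_identity:
  fixes G g :: "real \<Rightarrow> real" and k :: nat and gl :: real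
  defines "S \<equiv> open_support G"
  assumes G: "cont_dist_fun G" and "k \<ge> 1"
    and g: "continuous_on S g" "strict_mono_on S g" and g_lim: "(g \<longlongrightarrow> gl) (at_right_e (lG G))"
    and H: "\<And>s t. s \<in> S \<Longrightarrow> t \<in> S \<Longrightarrow> s < t \<Longrightarrow>
      G s < G t \<and> cond_exp_rec G k g s t = (real k * g t + g s) / (real k + 1)"
  shows "\<exists>c>0. \<forall>y\<in>S. G y = 1 - exp (- c * (g y - gl))"
proof (cases "S = {}")
  case False
  then obtain x0 where "x0 \<in> S" by blast
  let ?R = "hazR G"
  have less_1: "G x < 1" if "x \<in> S" for x
    using cdf_less_one_on_support[of G x] G that by (simp add: S_def cont_dist_fun_def)
  have R_strict: "strict_mono_on S ?R"
    by (rule strict_mono_onI) (use H less_1 hazR_strict_mono in blast)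
  have slope_limit: "((\<lambda>t'. (g t' - g t) / (?R t' - ?R t)) \<longlongrightarrow> (g t - g s) / (?R t - ?R s)) (at_right t)"
    if "s \<in> S" "t \<in> S" "s < t" for s t
    using cond_exp_identity_slope_limit[OF G \<open>k \<ge> 1\<close>] g H that unfolding S_def by blast
  have "\<exists>\<beta>. \<forall>a\<in>S. \<forall>b\<in>S. a < b \<longrightarrow> g b - g a = \<beta> * (?R b - ?R a)"
  proof (rule common_chord_slope[OF R_strict])
    fix a b t assume "a \<in> S" "b \<in> S" "t \<in> S" "a < t" "b < t"
    then show "(g t - g a) / (?R t - ?R a) = (g t - g b) / (?R t - ?R b)"
      using tendsto_unique[OF trivial_limit_at_right_real slope_limit slope_limit] by blast
  qed
  then obtain \<beta> where \<beta>: "\<forall>a\<in>S. \<forall>b\<in>S. a < b \<longrightarrow> g b - g a = \<beta> * (?R b - ?R a)" ..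
  obtain x1 where "x1 \<in> S" "x0 < x1"
    using eventually_happens[OF eventually_right_in_open_support] \<open>x0 \<in> S\<close>
    by (auto simp: S_def trivial_limit_at_right_real)
  then have "0 < \<beta> * (?R x1 - ?R x0)" "0 < ?R x1 - ?R x0"
    using \<beta> \<open>x0 \<in> S\<close> strict_mono_onD[OF g(2)] strict_mono_onD[OF R_strict] by force+
  then have "\<beta> > 0" by (rule zero_less_mult_pos2)
  then show ?thesis
    using exponential_of_affine_hazard[OF G g_lim \<open>\<beta> > 0\<close>] \<open>x0 \<in> S\<close> \<beta>
    by (intro exI[of _ "1 / \<beta>"]) (simp add: S_def)
qed (intro exI[of _ 1], simp)

text \<open>The characterisation.\<close>
theorem corollary1:
  fixes G g :: "real \<Rightarrow> real" and n k :: nat and gl :: real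
  assumes "n \<ge> 2" and "1 \<le> k" and "k \<le> n - 1"
    and "cont_dist_fun G"
    and "continuous_on {x. lG G < ereal x \<and> ereal x < rG G} g"
    and "strict_mono_on {x. lG G < ereal x \<and> ereal x < rG G} g"
    and "(g \<longlongrightarrow> gl) (at_right_e (lG G))"
    and "filterlim g at_top (at_left_e (rG G))"
  shows "(\<forall>s t. lG G < ereal s \<and> ereal s < ereal t \<and> ereal t < rG G \<longrightarrow>
            G s < G t \<and>
            cond_exp_rec G k g s t = (real k * g t + g s) / (real k + 1))
         \<longleftrightarrow>
         (\<exists>c>0. \<forall>y. lG G < ereal y \<and> ereal y < rG G \<longrightarrow>
            G y = 1 - exp (- c * (g y - gl)))"
proof -
  have support: "{x. lG G < ereal x \<and> ereal x < rG G} = open_support G"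
    by (simp add: open_support_def)
  note g = assms(5,6)[unfolded support]
  have in_support: "s \<in> open_support G" "t \<in> open_support G" "s < t"
    if "lG G < ereal s \<and> ereal s < ereal t \<and> ereal t < rG G" for s t
    using that order.strict_trans[of "ereal s" "ereal t" "rG G"] order.strict_trans[of "lG G" "ereal s" "ereal t"]
    by (auto simp: open_support_def)
  show ?thesis
  proof
    assume H: "\<forall>s t. lG G < ereal s \<and> ereal s < ereal t \<and> ereal t < rG G \<longrightarrow>
      G s < G t \<and> cond_exp_rec G k g s t = (real k * g t + g s) / (real k + 1)"
    have "\<exists>c>0. \<forall>y\<in>open_support G. G y = 1 - exp (- c * (g y - gl))"
      by (rule exponential_of_cond_exp_identity[OF assms(4,2) g assms(7)])
        (use H in \<open>auto simp: open_support_def\<close>)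
    then show "\<exists>c>0. \<forall>y. lG G < ereal y \<and> ereal y < rG G \<longrightarrow> G y = 1 - exp (- c * (g y - gl))"
      by (simp add: open_support_def)
  next
    assume "\<exists>c>0. \<forall>y. lG G < ereal y \<and> ereal y < rG G \<longrightarrow> G y = 1 - exp (- c * (g y - gl))"
    then obtain c where "c > 0" and exponential: "\<forall>y\<in>open_support G. G y = 1 - exp (- c * (g y - gl))"
      by (auto simp: open_support_def)
    show "\<forall>s t. lG G < ereal s \<and> ereal s < ereal t \<and> ereal t < rG G \<longrightarrow>
      G s < G t \<and> cond_exp_rec G k g s t = (real k * g t + g s) / (real k + 1)"
      using cond_exp_identity_of_exponential[OF assms(4,2) g \<open>c > 0\<close> exponential] in_support by blast
  qed
qed

end
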